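(* Let $S_1,S_2\in\mathbb S^{d\times d}$ and let $\Sigma_1,\Sigma_2$ be symmetric $d\times d$ matrices with $0\prec\sigma_{i,d}I_d\preceq\Sigma_i\preceq\sigma_{i,1}I_d$ for $i=1,2$. Then $$\langle\Sigma_1(S_1-S_2)\Sigma_2,S_1-S_2\rangle\ \ge\ \frac{\sigma_{1,1}\sigma_{2,1}\sigma_{1,d}\sigma_{2,d}}{\sigma_{1,1}\sigma_{2,1}+\sigma_{1,d}\sigma_{2,d}}\|S_1-S_2\|_F^2+\frac{\|\Sigma_1(S_1-S_2)\Sigma_2+\Sigma_2(S_1-S_2)\Sigma_1\|_F^2}{4(\sigma_{1,1}\sigma_{2,1}+\sigma_{1,d}\sigma_{2,d})}.$$
   Context: $\mathbb S^{d\times d}$ is the set of symmetric $d\times d$ matrices, $\langle A,B\rangle=\mathrm{tr}(A^{\mathrm T}B)$, $\|\cdot\|_F$ the Frobenius norm, and $A\preceq B$ means $B-A$ is positive semidefinite. *)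

theory Defs
  imports "HOL-Analysis.Analysis"
begin

definition symmetric_mat :: "real^'n^'n \<Rightarrow> bool" where
  "symmetric_mat A \<longleftrightarrow> transpose A = A"

definition psd :: "real^'n^'n \<Rightarrow> bool" where
  "psd M \<longleftrightarrow> symmetric_mat M \<and> (\<forall>x. 0 \<le> x \<bullet> (M *v x))"

definition loewner_le :: "real^'n^'n \<Rightarrow> real^'n^'n \<Rightarrow> bool" where
  "loewner_le A B \<longleftrightarrow> psd (B - A)"

definition frob_inner :: "real^'n^'n \<Rightarrow> real^'n^'n \<Rightarrow> real" where
  "frob_inner A B = trace (transpose A ** B)"

definition frob_norm :: "real^'n^'n \<Rightarrow> real" where
  "frob_norm A = sqrt (frob_inner A A)"

end

theory Submission
  imports Defs
begin

(* On matrices with the Frobenius inner product, the symmetrised sandwich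
   T Y = (Sig1 Y Sig2 + Sig2 Y Sig1) / 2 is self-adjoint, and
   m |Y|^2 \<le> <T Y, Y> \<le> M |Y|^2 with m = s1d s2d and M = s11 s21, because
   <P Y Q, Y> = tr ((Y^T P Y) Q) \<ge> 0 for positive semidefinite P, Q (write P as a sum of
   rank-one matrices v v^T). For such an operator (T - m)(M - T) \<ge> 0, that is
   |T X|^2 + m M |X|^2 \<le> (m + M) <T X, X>. For symmetric X = S1 - S2 we have
   <T X, X> = <Sig1 X Sig2, X>, and dividing by m + M gives the inequality. *)

lemma quadratic_nonneg_imp_discriminant_le:
  fixes p q r :: real
  assumes nonneg: "\<And>l. 0 \<le> p + 2*l*q + l^2*r" and "0 \<le> r"
  shows "q^2 \<le> p*r"
proof (cases "r = 0")
  case True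
  have "q = 0"
  proof (rule ccontr)
    assume "q \<noteq> 0"
    moreover have "0 \<le> p + 2*(-(p+1)/(2*q))*q + (-(p+1)/(2*q))^2*r" by (rule nonneg)
    ultimately show False using True by (simp add: field_simps)
  qed
  then show ?thesis using True by simp
next
  case False
  with \<open>0 \<le> r\<close> have "r > 0" by simp
  have "0 \<le> p + 2*(-q/r)*q + (-q/r)^2*r" by (rule nonneg)
  then have "0 \<le> p - q^2/r" using \<open>r > 0\<close> by (simp add: field_simps power2_eq_square)
  then show ?thesis using \<open>r > 0\<close> by (simp add: field_simps)
qed

lemma selfadjoint_cauchy_schwarz:
  fixes P :: "'a::real_inner \<Rightarrow> 'a"
  assumes "linear P" and adj: "\<And>x y. P x \<bullet> y = x \<bullet> P y" and pos: "\<And>x. 0 \<le> P x \<bullet> x"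
  shows "(P x \<bullet> y)^2 \<le> (P x \<bullet> x) * (P y \<bullet> y)"
proof (rule quadratic_nonneg_imp_discriminant_le)
  fix l :: real
  have "0 \<le> P (x + l *\<^sub>R y) \<bullet> (x + l *\<^sub>R y)" by (rule pos)
  also have "\<dots> = P x \<bullet> x + 2*l*(P x \<bullet> y) + l^2*(P y \<bullet> y)"
    using adj[of y x]
    by (simp add: linear_add[OF \<open>linear P\<close>] linear_cmul[OF \<open>linear P\<close>] inner_add_left
        inner_add_right power2_eq_square algebra_simps inner_commute[of y "P x"])
  finally show "0 \<le> P x \<bullet> x + 2*l*(P x \<bullet> y) + l^2*(P y \<bullet> y)" .
  show "0 \<le> P y \<bullet> y" by (rule pos)
qed

lemma selfadjoint_inner_image_le:
  fixes P :: "'a::real_inner \<Rightarrow> 'a"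
  assumes "linear P" and "\<And>x y. P x \<bullet> y = x \<bullet> P y" and pos: "\<And>x. 0 \<le> P x \<bullet> x"
    and bound: "\<And>x. P x \<bullet> x \<le> c * (x \<bullet> x)" and "0 \<le> c"
  shows "P x \<bullet> P x \<le> c * (P x \<bullet> x)"
proof -
  define u where "u = P x \<bullet> P x"
  define t where "t = P x \<bullet> x"
  have "0 \<le> t" using pos unfolding t_def .
  have "u^2 \<le> t * (P (P x) \<bullet> P x)"
    using selfadjoint_cauchy_schwarz[OF assms(1-3), of x "P x"] unfolding u_def t_def .
  also have "\<dots> \<le> t * (c * u)"
    using bound[of "P x"] \<open>0 \<le> t\<close> unfolding u_def by (simp add: mult_left_mono)
  finally have "u * u \<le> (c * t) * u" by (simp add: power2_eq_square mult_ac)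
  moreover have "0 \<le> u" unfolding u_def by simp
  ultimately have "u \<le> c * t"
    using \<open>0 \<le> c\<close> \<open>0 \<le> t\<close> by (cases "u = 0") (simp_all add: mult_le_cancel_right)
  then show ?thesis unfolding u_def t_def .
qed

(* Equivalently 0 \<le> (T x - m x) \<bullet> (M x - T x): apply selfadjoint_inner_image_le to T - m,
   which lies between 0 and M - m. *)
lemma selfadjoint_inner_image_le_bounds:
  fixes T :: "'a::real_inner \<Rightarrow> 'a"
  assumes "linear T" and adj: "\<And>x y. T x \<bullet> y = x \<bullet> T y"
    and lower: "\<And>x. m * (x \<bullet> x) \<le> T x \<bullet> x" and upper: "\<And>x. T x \<bullet> x \<le> M * (x \<bullet> x)"
    and "m \<le> M"
  shows "T x \<bullet> T x + m * M * (x \<bullet> x) \<le> (m + M) * (T x \<bullet> x)"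
proof -
  define P where "P y = T y - m *\<^sub>R y" for y
  have "linear P"
    unfolding P_def by (intro linear_compose_sub \<open>linear T\<close> linear_scaleR)
  moreover have "P y \<bullet> z = y \<bullet> P z" for y z
    by (simp add: P_def inner_diff_left inner_diff_right adj)
  moreover have "0 \<le> P y \<bullet> y" for y
    using lower[of y] by (simp add: P_def inner_diff_left)
  moreover have "P y \<bullet> y \<le> (M - m) * (y \<bullet> y)" for y
    using upper[of y] by (simp add: P_def inner_diff_left algebra_simps)
  ultimately have "P x \<bullet> P x \<le> (M - m) * (P x \<bullet> x)"
    by (rule selfadjoint_inner_image_le) (use \<open>m \<le> M\<close> in simp)
  moreover have "x \<bullet> T x = T x \<bullet> x" by (rule inner_commute)
  ultimately show ?thesis
    by (simp add: P_def inner_diff_left inner_diff_right power2_eq_square algebra_simps)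
qed

lemma frob_inner_eq_inner: "frob_inner A B = A \<bullet> B"
proof -
  have "frob_inner A B = (\<Sum>i\<in>UNIV. \<Sum>k\<in>UNIV. A$k$i * B$k$i)"
    unfolding frob_inner_def trace_def matrix_matrix_mult_def transpose_def by simp
  also have "\<dots> = (\<Sum>k\<in>UNIV. \<Sum>i\<in>UNIV. A$k$i * B$k$i)" by (rule sum.swap)
  also have "\<dots> = A \<bullet> B" by (simp add: inner_vec_def)
  finally show ?thesis .
qed

lemma frob_norm_power2: "(frob_norm A)^2 = A \<bullet> A"
  unfolding frob_norm_def frob_inner_eq_inner by simp

lemma inner_transpose: "transpose A \<bullet> transpose B = (A::real^'n^'m) \<bullet> B"
proof -
  have "transpose A \<bullet> transpose B = (\<Sum>i\<in>UNIV. \<Sum>k\<in>UNIV. A$k$i * B$k$i)"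
    by (simp add: inner_vec_def transpose_def)
  also have "\<dots> = A \<bullet> B" by (subst sum.swap) (simp add: inner_vec_def)
  finally show ?thesis .
qed

lemma matrix_add_rdistrib: "((A::real^'n^'m) + B) ** C = A ** C + B ** C"
  by (vector matrix_matrix_mult_def sum.distrib[symmetric] field_simps)

lemma matrix_diff_rdistrib: "((A::real^'n^'m) - B) ** C = A ** C - B ** C"
  by (vector matrix_matrix_mult_def sum_subtractf[symmetric] field_simps)

lemma matrix_diff_ldistrib: "(A::real^'n^'m) ** (B - C) = A ** B - A ** C"
  by (vector matrix_matrix_mult_def sum_subtractf[symmetric] field_simps)

lemma mat_eq_scaleR_mat_1: "(mat c :: real^'n^'n) = c *\<^sub>R mat 1"
  by (simp add: vec_eq_iff mat_def)

lemma matrix_mul_mat_left: "mat c ** (A::real^'m^'n) = c *\<^sub>R A"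
  by (metis mat_eq_scaleR_mat_1 matrix_mul_lid scalar_matrix_assoc)

lemma matrix_mul_mat_right: "(A::real^'m^'n) ** mat c = c *\<^sub>R A"
  by (metis mat_eq_scaleR_mat_1 matrix_mul_rid matrix_scalar_ac)

lemma matrix_vector_mul_mat: "mat c *v (x::real^'n) = c *\<^sub>R x"
  by (metis mat_eq_scaleR_mat_1 matrix_vector_mul_lid scaleR_matrix_vector_assoc)

lemma transpose_add: "transpose ((A::real^'n^'m) + B) = transpose A + transpose B"
  by (simp add: vec_eq_iff transpose_def)

lemma transpose_diff: "transpose ((A::real^'n^'m) - B) = transpose A - transpose B"
  by (simp add: vec_eq_iff transpose_def)

lemma symmetric_mat_diff: "symmetric_mat A \<Longrightarrow> symmetric_mat B \<Longrightarrow> symmetric_mat (A - B)"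
  by (simp add: symmetric_mat_def transpose_diff)

lemma symmetric_mat_entry: "symmetric_mat P \<Longrightarrow> P$i$j = P$j$i"
  unfolding symmetric_mat_def by (metis transpose_def vec_lambda_beta)

lemma symmetric_mat_inner_commute: "symmetric_mat P \<Longrightarrow> x \<bullet> (P *v y) = (P *v x) \<bullet> y"
  unfolding symmetric_mat_def by (metis dot_lmul_matrix vector_transpose_matrix)

lemma inner_axis_matrix_vector: "axis i 1 \<bullet> ((P::real^'n^'n) *v axis j 1) = P$i$j"
  by (subst inner_axis') (simp add: matrix_vector_mult_def axis_def if_distrib cong: if_cong)

lemma psd_cauchy_schwarz:
  assumes "psd P"
  shows "(x \<bullet> (P *v y))^2 \<le> (x \<bullet> (P *v x)) * (y \<bullet> (P *v y))"
proof -
  have sym: "symmetric_mat P" and pos: "\<And>z. 0 \<le> z \<bullet> (P *v z)"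
    using assms by (simp_all add: psd_def)
  have "((P *v y) \<bullet> x)^2 \<le> ((P *v y) \<bullet> y) * ((P *v x) \<bullet> x)"
  proof (rule selfadjoint_cauchy_schwarz)
    show "linear ((*v) P)" by simp
    show "(P *v u) \<bullet> w = u \<bullet> (P *v w)" for u w
      by (simp add: symmetric_mat_inner_commute[OF sym])
    show "0 \<le> (P *v u) \<bullet> u" for u
      using pos[of u] by (simp only: inner_commute)
  qed
  then show ?thesis
    by (simp only: inner_commute[of "P *v _"] mult.commute)
qed

lemma psd_diagonal_nonneg: "psd P \<Longrightarrow> 0 \<le> P$i$i"
  unfolding psd_def by (metis inner_axis_matrix_vector)

lemma psd_entry_power2_le: "psd P \<Longrightarrow> (P$i$j)^2 \<le> P$i$i * P$j$j"
  using psd_cauchy_schwarz[of P "axis i 1" "axis j 1"] by (simp add: inner_axis_matrix_vector)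

lemma psd_zero_diagonal_eq_0:
  assumes "psd P" and "\<And>i. P$i$i = 0"
  shows "P = 0"
proof -
  have "(P$i$j)^2 \<le> 0" for i j
    using psd_entry_power2_le[OF \<open>psd P\<close>, of i j] assms(2) by simp
  then show ?thesis by (simp add: vec_eq_iff)
qed

definition outer_square :: "real^'n \<Rightarrow> real^'n^'n" where
  "outer_square v = (\<chi> i j. v$i * v$j)"

lemma trace_outer_square_mult: "trace (outer_square v ** Q) = v \<bullet> (Q *v v)"
proof -
  have "trace (outer_square v ** Q) = (\<Sum>i\<in>UNIV. \<Sum>k\<in>UNIV. v$i * v$k * Q$k$i)"
    by (simp add: trace_def outer_square_def matrix_matrix_mult_def)
  also have "\<dots> = (\<Sum>k\<in>UNIV. \<Sum>i\<in>UNIV. v$k * (Q$k$i * v$i))"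
    by (subst sum.swap) (simp add: mult_ac)
  also have "\<dots> = v \<bullet> (Q *v v)"
    by (simp add: inner_vec_def matrix_vector_mult_def sum_distrib_left)
  finally show ?thesis .
qed

(* One step of a Cholesky factorisation: remove the rank-one part carried by row i. *)
lemma psd_split_outer_square:
  fixes P :: "real^'n^'n"
  assumes "psd P" and "P$i$i \<noteq> 0"
  obtains v where "psd (P - outer_square v)" and "(P - outer_square v)$i$i = 0"
proof
  define d where "d = P$i$i"
  have "d > 0" using assms psd_diagonal_nonneg[OF \<open>psd P\<close>, of i] unfolding d_def by simp
  define v :: "real^'n" where "v = (\<chi> j. P$j$i / sqrt d)"
  have sym: "symmetric_mat P" using \<open>psd P\<close> by (simp add: psd_def)
  have entry: "(P - outer_square v)$j$l = P$j$l - P$j$i * P$l$i / d" for j l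
    using \<open>d > 0\<close> by (simp add: outer_square_def v_def real_sqrt_mult[symmetric])
  show "(P - outer_square v)$i$i = 0"
    unfolding entry using \<open>d > 0\<close> by (simp add: d_def)
  have "0 \<le> z \<bullet> ((P - outer_square v) *v z)" for z
  proof -
    have "P *v axis i 1 = (\<chi> k. P$k$i)"
      by (simp add: vec_eq_iff matrix_vector_mult_def axis_def if_distrib cong: if_cong)
    then have vz: "v \<bullet> z = (z \<bullet> (P *v axis i 1)) / sqrt d"
      by (simp add: v_def inner_vec_def sum_divide_distrib mult_ac)
    have "(z \<bullet> (P *v axis i 1))^2 \<le> (z \<bullet> (P *v z)) * d"
      using psd_cauchy_schwarz[OF \<open>psd P\<close>, of z "axis i 1"]
      by (simp add: inner_axis_matrix_vector d_def)
    then have "(v \<bullet> z)^2 \<le> z \<bullet> (P *v z)"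
      using \<open>d > 0\<close> by (simp add: vz power_divide field_simps)
    moreover have "outer_square v *v z = (v \<bullet> z) *\<^sub>R v"
      by (simp add: vec_eq_iff outer_square_def matrix_vector_mult_def inner_vec_def
          sum_distrib_left mult_ac)
    ultimately show ?thesis
      by (simp add: matrix_vector_mult_diff_rdistrib inner_diff_right power2_eq_square
          inner_commute)
  qed
  moreover have "symmetric_mat (P - outer_square v)"
    unfolding symmetric_mat_def
    by (simp add: vec_eq_iff transpose_def outer_square_def symmetric_mat_entry[OF sym] mult.commute)
  ultimately show "psd (P - outer_square v)" by (simp add: psd_def)
qed

lemma psd_eq_sum_outer_squares: "psd P \<Longrightarrow> \<exists>vs. P = (\<Sum>v\<leftarrow>vs. outer_square v)"
proof (induction "card {i. P$i$i \<noteq> 0}" arbitrary: P rule: less_induct)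
  case less
  show ?case
  proof (cases "\<forall>i. P$i$i = 0")
    case True
    then show ?thesis using psd_zero_diagonal_eq_0[OF less.prems] by (intro exI[of _ "[]"]) simp
  next
    case False
    then obtain i where "P$i$i \<noteq> 0" by blast
    with less.prems obtain v where psd': "psd (P - outer_square v)"
      and zero: "(P - outer_square v)$i$i = 0"
      by (rule psd_split_outer_square)
    have "(P - outer_square v)$j$j \<noteq> 0 \<Longrightarrow> P$j$j \<noteq> 0" for j
      using psd_diagonal_nonneg[OF psd', of j] by (auto simp: outer_square_def simp flip: power2_eq_square)
    with zero \<open>P$i$i \<noteq> 0\<close>
    have "{j. (P - outer_square v)$j$j \<noteq> 0} \<subset> {j. P$j$j \<noteq> 0}" by blast
    then have "card {j. (P - outer_square v)$j$j \<noteq> 0} < card {j. P$j$j \<noteq> 0}"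
      by (simp add: psubset_card_mono)
    then obtain vs where "P - outer_square v = (\<Sum>w\<leftarrow>vs. outer_square w)"
      using less.hyps psd' by blast
    then have "P = (\<Sum>w\<leftarrow>v # vs. outer_square w)" by (simp add: algebra_simps)
    then show ?thesis by blast
  qed
qed

lemma trace_psd_mult_nonneg:
  assumes "psd P" and "psd Q"
  shows "0 \<le> trace (P ** Q)"
proof -
  obtain vs where "P = (\<Sum>v\<leftarrow>vs. outer_square v)"
    using psd_eq_sum_outer_squares[OF \<open>psd P\<close>] by blast
  moreover have "0 \<le> trace ((\<Sum>v\<leftarrow>vs. outer_square v) ** Q)"
    using \<open>psd Q\<close>
    by (induction vs) (simp_all add: matrix_add_rdistrib trace_add trace_0[unfolded mat_0]
        trace_outer_square_mult psd_def)
  ultimately show ?thesis by simp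
qed

lemma psd_congruence:
  assumes "psd P"
  shows "psd (transpose X ** P ** X)"
proof -
  have "z \<bullet> ((transpose X ** P ** X) *v z) = (X *v z) \<bullet> (P *v (X *v z))" for z
  proof -
    have "(transpose X ** P ** X) *v z = (P *v (X *v z)) v* X"
      by (simp flip: matrix_vector_mul_assoc)
    then show ?thesis by (metis dot_lmul_matrix inner_commute)
  qed
  moreover have "transpose (transpose X ** P ** X) = transpose X ** P ** X"
    using assms by (simp add: psd_def symmetric_mat_def matrix_transpose_mul matrix_mul_assoc)
  ultimately show ?thesis
    using assms by (simp add: psd_def symmetric_mat_def)
qed

lemma inner_sandwich_psd_nonneg:
  fixes P Q X :: "real^'n^'n"
  assumes "psd P" and "psd Q"
  shows "0 \<le> (P ** X ** Q) \<bullet> X"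
proof -
  have "transpose P = P" and "transpose Q = Q"
    using assms by (simp_all add: psd_def symmetric_mat_def)
  then have "(P ** X ** Q) \<bullet> X = trace ((transpose X ** P ** X) ** Q)"
    unfolding frob_inner_eq_inner[symmetric] frob_inner_def
    by (metis matrix_transpose_mul matrix_mul_assoc trace_mul_sym)
  also have "\<dots> \<ge> 0"
    using assms by (intro trace_psd_mult_nonneg psd_congruence)
  finally show ?thesis .
qed

lemma psd_mat: "0 \<le> c \<Longrightarrow> psd (mat c :: real^'n^'n)"
  by (simp add: psd_def symmetric_mat_def matrix_vector_mul_mat)

lemma psd_add: "psd A \<Longrightarrow> psd B \<Longrightarrow> psd ((A::real^'n^'n) + B)"
  by (simp add: psd_def symmetric_mat_def transpose_add matrix_vector_mult_add_rdistrib
      inner_add_right)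

lemma loewner_le_trans: "loewner_le A B \<Longrightarrow> loewner_le B C \<Longrightarrow> loewner_le A (C::real^'n^'n)"
  unfolding loewner_le_def using psd_add[of "C - B" "B - A"] by simp

lemma loewner_le_psd: "loewner_le A B \<Longrightarrow> psd A \<Longrightarrow> psd (B::real^'n^'n)"
  unfolding loewner_le_def using psd_add[of "B - A" A] by simp

lemma loewner_le_mat_imp_le: "loewner_le (mat c) (mat d :: real^'n^'n) \<Longrightarrow> c \<le> d"
  using psd_diagonal_nonneg[of "mat d - mat c :: real^'n^'n"]
  by (simp add: loewner_le_def mat_def)

lemma inner_sandwich_bounds:
  fixes A B X :: "real^'n^'n"
  assumes "0 \<le> al" "loewner_le (mat al) A" "loewner_le A (mat a)"
    and "0 \<le> be" "loewner_le (mat be) B" "loewner_le B (mat b)"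
  shows "al * be * (X \<bullet> X) \<le> (A ** X ** B) \<bullet> X"
    and "(A ** X ** B) \<bullet> X \<le> a * b * (X \<bullet> X)"
proof -
  have "psd A" and "psd B"
    using assms loewner_le_psd psd_mat by blast+
  have "0 \<le> b"
    using assms(4) loewner_le_mat_imp_le[OF loewner_le_trans[OF assms(5,6)]] by simp
  have lower_gap: "A ** X ** B - (al * be) *\<^sub>R X
      = (A - mat al) ** X ** B + al *\<^sub>R (mat 1 ** X ** (B - mat be))"
    by (simp add: matrix_diff_rdistrib matrix_diff_ldistrib matrix_mul_mat_left matrix_mul_mat_right
        matrix_scalar_ac scalar_matrix_assoc[symmetric] algebra_simps)
  have "0 \<le> (A ** X ** B - (al * be) *\<^sub>R X) \<bullet> X"
    unfolding lower_gap inner_add_left inner_scaleR_left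
    by (intro add_nonneg_nonneg mult_nonneg_nonneg inner_sandwich_psd_nonneg psd_mat)
      (use assms \<open>psd B\<close> in \<open>simp_all add: loewner_le_def\<close>)
  then show "al * be * (X \<bullet> X) \<le> (A ** X ** B) \<bullet> X"
    by (simp add: inner_diff_left)
  have upper_gap: "(a * b) *\<^sub>R X - A ** X ** B = (mat a - A) ** X ** mat b + A ** X ** (mat b - B)"
    by (simp add: matrix_diff_rdistrib matrix_diff_ldistrib matrix_mul_mat_left matrix_mul_mat_right
        matrix_scalar_ac scalar_matrix_assoc[symmetric] algebra_simps)
  have "0 \<le> ((a * b) *\<^sub>R X - A ** X ** B) \<bullet> X"
    unfolding upper_gap inner_add_left
    by (intro add_nonneg_nonneg inner_sandwich_psd_nonneg psd_mat)
      (use assms \<open>psd A\<close> \<open>0 \<le> b\<close> in \<open>simp_all add: loewner_le_def\<close>)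
  then show "(A ** X ** B) \<bullet> X \<le> a * b * (X \<bullet> X)"
    by (simp add: inner_diff_left)
qed

lemma inner_sandwich_adjoint:
  fixes A B X Y :: "real^'n^'n"
  assumes "symmetric_mat A" "symmetric_mat B"
  shows "(A ** X ** B) \<bullet> Y = X \<bullet> (A ** Y ** B)"
proof -
  have "(A ** X ** B) \<bullet> Y = trace (B ** transpose X ** A ** Y)"
    using assms unfolding frob_inner_eq_inner[symmetric] frob_inner_def symmetric_mat_def
    by (simp add: matrix_transpose_mul matrix_mul_assoc)
  also have "\<dots> = trace ((transpose X ** A ** Y) ** B)"
    by (metis trace_mul_sym matrix_mul_assoc)
  also have "\<dots> = X \<bullet> (A ** Y ** B)"
    unfolding frob_inner_eq_inner[symmetric] frob_inner_def by (simp add: matrix_mul_assoc)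
  finally show ?thesis .
qed

lemma inner_sandwich_swap:
  fixes A B X :: "real^'n^'n"
  assumes "symmetric_mat A" "symmetric_mat B" "symmetric_mat X"
  shows "(B ** X ** A) \<bullet> X = (A ** X ** B) \<bullet> X"
  using inner_transpose[of "B ** X ** A" X] assms
  by (simp add: symmetric_mat_def matrix_transpose_mul matrix_mul_assoc)

lemma inner_symmetrized_sandwich_bound:
  fixes A B X :: "real^'n^'n"
  assumes sym: "symmetric_mat A" "symmetric_mat B" "symmetric_mat X"
    and A: "0 \<le> al" "loewner_le (mat al) A" "loewner_le A (mat a)"
    and B: "0 \<le> be" "loewner_le (mat be) B" "loewner_le B (mat b)"
  shows "(A ** X ** B + B ** X ** A) \<bullet> (A ** X ** B + B ** X ** A) + 4 * (al * be) * (a * b) * (X \<bullet> X)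
    \<le> 4 * (al * be + a * b) * ((A ** X ** B) \<bullet> X)"
proof -
  define T where "T Y = (1/2::real) *\<^sub>R (A ** Y ** B + B ** Y ** A)" for Y
  have "linear T"
    by (rule linearI) (simp_all add: T_def matrix_add_ldistrib matrix_add_rdistrib
        matrix_scalar_ac scalar_matrix_assoc[symmetric] scaleR_add_right)
  moreover have "T Y \<bullet> Z = Y \<bullet> T Z" for Y Z
    using inner_sandwich_adjoint[OF sym(1,2)] inner_sandwich_adjoint[OF sym(2,1)]
    by (simp add: T_def inner_add_left inner_add_right)
  moreover have "al * be * (Y \<bullet> Y) \<le> T Y \<bullet> Y" and "T Y \<bullet> Y \<le> a * b * (Y \<bullet> Y)" for Y
    using inner_sandwich_bounds[OF A B, of Y] inner_sandwich_bounds[OF B A, of Y]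
    by (simp_all add: T_def inner_add_left mult_ac)
  moreover have "al * be \<le> a * b"
  proof -
    have "al \<le> a" "be \<le> b"
      using A B by (metis loewner_le_mat_imp_le loewner_le_trans)+
    then show ?thesis using A B by (intro mult_mono) simp_all
  qed
  ultimately have "T X \<bullet> T X + al * be * (a * b) * (X \<bullet> X) \<le> (al * be + a * b) * (T X \<bullet> X)"
    by (rule selfadjoint_inner_image_le_bounds)
  moreover have "T X \<bullet> X = (A ** X ** B) \<bullet> X"
    using inner_sandwich_swap[OF sym] by (simp add: T_def inner_add_left)
  moreover have "T X \<bullet> T X = (A ** X ** B + B ** X ** A) \<bullet> (A ** X ** B + B ** X ** A) / 4"
    by (simp add: T_def)
  ultimately have "(A ** X ** B + B ** X ** A) \<bullet> (A ** X ** B + B ** X ** A) / 4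
      + al * be * (a * b) * (X \<bullet> X) \<le> (al * be + a * b) * ((A ** X ** B) \<bullet> X)"
    by simp
  then show ?thesis by linarith
qed

theorem lemmaE:
  fixes S1 S2 Sig1 Sig2 :: "real^'n^'n"
    and s11 s1d s21 s2d :: real
  assumes "symmetric_mat S1" and "symmetric_mat S2"
    and "symmetric_mat Sig1" and "symmetric_mat Sig2"
    and "0 < s1d" and "loewner_le (mat s1d) Sig1" and "loewner_le Sig1 (mat s11)"
    and "0 < s2d" and "loewner_le (mat s2d) Sig2" and "loewner_le Sig2 (mat s21)"
  shows "frob_inner (Sig1 ** (S1 - S2) ** Sig2) (S1 - S2) \<ge>
           (s11 * s21 * s1d * s2d) / (s11 * s21 + s1d * s2d) * (frob_norm (S1 - S2))\<^sup>2
           + (frob_norm (Sig1 ** (S1 - S2) ** Sig2 + Sig2 ** (S1 - S2) ** Sig1))\<^sup>2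
             / (4 * (s11 * s21 + s1d * s2d))"
proof -
  define X where "X = S1 - S2"
  have "symmetric_mat X"
    unfolding X_def using assms(1,2) by (rule symmetric_mat_diff)
  then have bound: "(Sig1 ** X ** Sig2 + Sig2 ** X ** Sig1) \<bullet> (Sig1 ** X ** Sig2 + Sig2 ** X ** Sig1)
      + 4 * (s1d * s2d) * (s11 * s21) * (X \<bullet> X)
      \<le> 4 * (s1d * s2d + s11 * s21) * ((Sig1 ** X ** Sig2) \<bullet> X)"
    using assms by (intro inner_symmetrized_sandwich_bound) simp_all
  have "s1d \<le> s11" "s2d \<le> s21"
    using assms loewner_le_mat_imp_le loewner_le_trans by blast+
  then have pos: "0 < s11 * s21 + s1d * s2d"
    using assms(5,8) by (simp add: add_pos_pos mult_pos_pos)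
  have rearrange: "M * m / (M + m) * n + z / (4 * (M + m)) \<le> t"
    if "0 < M + m" and "z + 4 * m * M * n \<le> 4 * (m + M) * t" for M m n z t :: real
  proof -
    have "M + m \<noteq> 0" using that(1) by simp
    then have "M * m / (M + m) * n + z / (4 * (M + m)) = (z + 4 * m * M * n) / (4 * (M + m))"
      by (simp add: divide_simps) (simp add: algebra_simps)
    also have "\<dots> \<le> t"
      using that by (simp add: pos_divide_le_eq add.commute mult.commute)
    finally show ?thesis .
  qed
  show ?thesis
    using rearrange[OF pos bound]
    unfolding X_def[symmetric] frob_inner_eq_inner frob_norm_power2 by (simp add: mult.assoc)
qed
end
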